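(* Let $G$ be a primitive strongly regular graph with parameters $(v,k,\lambda,\mu)$. Then $k/\Lambda(G) > \sqrt{k/\sqrt{v}}$.
   Context: A graph is strongly regular with parameters $(v,k,\lambda,\mu)$ if it is a $k$-regular graph on $v$ vertices such that each edge lies in exactly $\lambda$ triangles and any two distinct non-adjacent vertices have exactly $\mu$ common neighbours; complete and edgeless graphs are excluded. A strongly regular graph is primitive if both it and its complement are connected. For a $k$-regular graph with adjacency eigenvalues $k=\lambda_1\ge\dots\ge\lambda_v$, $\Lambda(G)=\max\{|\lambda_i|: 2\le i\le v\}$. *)

theory Defs
  imports "Jordan_Normal_Form.Char_Poly" "HOL-Computational_Algebra.Fundamental_Theorem_Algebra"
begin

text \<open>Simple graphs on the vertex set {0..<v}, given by an adjacency predicate E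
  (only its values on pairs of vertices matter).\<close>

definition simple_graph :: "nat \<Rightarrow> (nat \<Rightarrow> nat \<Rightarrow> bool) \<Rightarrow> bool" where
  "simple_graph v E \<longleftrightarrow> (\<forall>i<v. \<not> E i i) \<and> (\<forall>i<v. \<forall>j<v. E i j \<longrightarrow> E j i)"

definition strongly_regular ::
  "nat \<Rightarrow> (nat \<Rightarrow> nat \<Rightarrow> bool) \<Rightarrow> nat \<Rightarrow> nat \<Rightarrow> nat \<Rightarrow> bool" where
  "strongly_regular v E k lam mu \<longleftrightarrow>
     simple_graph v E \<and>
     (\<forall>i<v. card {j. j < v \<and> E i j} = k) \<and>
     (\<forall>i<v. \<forall>j<v. E i j \<longrightarrow> card {l. l < v \<and> E i l \<and> E j l} = lam) \<and>
     (\<forall>i<v. \<forall>j<v. i \<noteq> j \<and> \<not> E i j \<longrightarrow> card {l. l < v \<and> E i l \<and> E j l} = mu) \<and>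
     \<comment> \<open>not complete\<close>
     (\<exists>i<v. \<exists>j<v. i \<noteq> j \<and> \<not> E i j) \<and>
     \<comment> \<open>not edgeless\<close>
     (\<exists>i<v. \<exists>j<v. E i j)"

definition connected_graph :: "nat \<Rightarrow> (nat \<Rightarrow> nat \<Rightarrow> bool) \<Rightarrow> bool" where
  "connected_graph v E \<longleftrightarrow>
     (\<forall>i<v. \<forall>j<v. (\<lambda>a b. a < v \<and> b < v \<and> E a b)\<^sup>*\<^sup>* i j)"

definition complement_graph :: "(nat \<Rightarrow> nat \<Rightarrow> bool) \<Rightarrow> nat \<Rightarrow> nat \<Rightarrow> bool" where
  "complement_graph E = (\<lambda>i j. i \<noteq> j \<and> \<not> E i j)"

definition primitive_srg ::
  "nat \<Rightarrow> (nat \<Rightarrow> nat \<Rightarrow> bool) \<Rightarrow> nat \<Rightarrow> nat \<Rightarrow> nat \<Rightarrow> bool" where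
  "primitive_srg v E k lam mu \<longleftrightarrow>
     strongly_regular v E k lam mu \<and> connected_graph v E \<and>
     connected_graph v (complement_graph E)"

definition adj_matrix :: "nat \<Rightarrow> (nat \<Rightarrow> nat \<Rightarrow> bool) \<Rightarrow> real mat" where
  "adj_matrix v E = mat v v (\<lambda>(i, j). if E i j then 1 else 0)"

definition adj_eigenvalues :: "nat \<Rightarrow> (nat \<Rightarrow> nat \<Rightarrow> bool) \<Rightarrow> complex multiset" where
  "adj_eigenvalues v E = proots (char_poly (map_mat complex_of_real (adj_matrix v E)))"

text \<open>For a k-regular graph, lambda_1 = k; Lambda(G) is the largest absolute value
  among the remaining eigenvalues lambda_2, ..., lambda_v (one copy of k removed).\<close>
definition Lambda_reg :: "nat \<Rightarrow> (nat \<Rightarrow> nat \<Rightarrow> bool) \<Rightarrow> nat \<Rightarrow> real" where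
  "Lambda_reg v E k =
     Max (cmod ` set_mset (adj_eigenvalues v E - {# complex_of_real (real k) #}))"

end

theory Submission
  imports Defs "Jordan_Normal_Form.Schur_Decomposition" "HOL-Analysis.Convex"
begin

(*
  Besides the eigenvalue k (of multiplicity one) the adjacency matrix has only the two roots
  r > 0 > s of x^2 - (lambda - mu) x - (k - mu), so Lambda = |t| for one of them, of some
  multiplicity m >= 1. The trace of A^2 gives m t^2 <= k (v - k). The primitive idempotent E of t
  is a projection of rank m whose entries take only three values e0, e1, e2, so the v quadratic
  polynomials (<x, E e_i> - e1) (<x, E e_i> - e2) vanish at every E e_j except E e_i; as symmetric
  tensors over a space of dimension m + 1 they give the absolute bound v <= (m + 1) (m + 2) / 2.
  Together the two inequalities yield Lambda^2 < k sqrt v.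
*)

section \<open>Finite sums and symmetric tensors\<close>

lemma card_filter_lessThan_eq_sum:
  fixes n :: nat
  shows "real (card {l. l < n \<and> P l}) = (\<Sum>l<n. of_bool (P l))"
proof -
  have "{l. l < n \<and> P l} = {..<n} \<inter> {l. P l}" by auto
  moreover have "(\<Sum>l<n. of_bool (P l)) = real (card ({..<n} \<inter> {l. P l}))"
    by (rule sum_of_bool_eq) simp_all
  ultimately show ?thesis by simp
qed

lemma sum_atMost_eq_lessThan_add: "(\<Sum>a\<le>n. f a) = (\<Sum>a<n. f a) + f (n::nat)"
  by (simp add: lessThan_Suc_atMost[symmetric])

lemma sum_of_bool_eq_mult_left:
  fixes n :: nat
  assumes "i < n"
  shows "(\<Sum>l<n. of_bool (i = l) * f l) = (f i :: 'a::comm_semiring_1)"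
proof -
  have "(\<Sum>l<n. of_bool (i = l) * f l) = (\<Sum>l<n. if l = i then f i else 0)" by (intro sum.cong) auto
  then show ?thesis using assms by simp
qed

lemma sum_of_bool_eq_mult_right:
  fixes n :: nat
  assumes "j < n"
  shows "(\<Sum>l<n. f l * of_bool (l = j)) = (f j :: 'a::comm_semiring_1)"
proof -
  have "(\<Sum>l<n. f l * of_bool (l = j)) = (\<Sum>l<n. if l = j then f j else 0)" by (intro sum.cong) auto
  then show ?thesis using assms by simp
qed

lemma sum_Times_mult:
  fixes f g :: "'a \<Rightarrow> 'b::comm_semiring_0"
  shows "(\<Sum>p\<in>A \<times> A. f (fst p) * g (snd p)) = (\<Sum>a\<in>A. f a) * (\<Sum>b\<in>A. g b)"
proof -
  have "(\<Sum>p\<in>A \<times> A. f (fst p) * g (snd p)) = (\<Sum>a\<in>A. \<Sum>b\<in>A. f a * g b)"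
    by (simp add: sum.cartesian_product split_def)
  then show ?thesis by (simp add: sum_product)
qed

text \<open>Tensors over \<open>'a\<close> are functions on \<open>'a \<times> 'a\<close>: \<open>sym_tensor f g\<close> is the symmetrised
  product of \<open>f\<close> and \<open>g\<close>, and \<open>sym_square F\<close> is the matrix of \<open>F \<otimes> F\<close> on symmetric tensors.\<close>

definition sym_tensor :: "('a \<Rightarrow> real) \<Rightarrow> ('a \<Rightarrow> real) \<Rightarrow> 'a \<times> 'a \<Rightarrow> real" where
  "sym_tensor f g p = (f (fst p) * g (snd p) + g (fst p) * f (snd p)) / 2"

definition sym_square :: "('a \<Rightarrow> 'a \<Rightarrow> real) \<Rightarrow> 'a \<times> 'a \<Rightarrow> 'a \<times> 'a \<Rightarrow> real" where
  "sym_square F p q =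
     (F (fst p) (fst q) * F (snd p) (snd q) + F (fst p) (snd q) * F (snd p) (fst q)) / 2"

lemma sym_square_sym_tensor:
  "(\<Sum>p\<in>A \<times> A. sym_square F p (c, d) * sym_tensor f g p) =
     sym_tensor (\<lambda>c. \<Sum>a\<in>A. F a c * f a) (\<lambda>c. \<Sum>a\<in>A. F a c * g a) (c, d)"
proof -
  have pointwise: "sym_square F p (c, d) * sym_tensor f g p =
     ((F (fst p) c * f (fst p)) * (F (snd p) d * g (snd p)) +
      (F (fst p) c * g (fst p)) * (F (snd p) d * f (snd p)) +
      (F (fst p) d * f (fst p)) * (F (snd p) c * g (snd p)) +
      (F (fst p) d * g (fst p)) * (F (snd p) c * f (snd p))) / 4" for p
    unfolding sym_square_def sym_tensor_def by (simp add: algebra_simps)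
  show ?thesis
    by (simp only: pointwise sum_divide_distrib[symmetric] sum.distrib
        sum_Times_mult[of "\<lambda>a. F a c * f a" "\<lambda>b. F b d * g b"]
        sum_Times_mult[of "\<lambda>a. F a c * g a" "\<lambda>b. F b d * f b"]
        sum_Times_mult[of "\<lambda>a. F a d * f a" "\<lambda>b. F b c * g b"]
        sum_Times_mult[of "\<lambda>a. F a d * g a" "\<lambda>b. F b c * f b"])
      (simp add: sym_tensor_def algebra_simps)
qed

lemma inner_sym_tensor:
  "(\<Sum>p\<in>A \<times> A. sym_tensor f g p * sym_tensor h l p) =
     ((\<Sum>a\<in>A. f a * h a) * (\<Sum>a\<in>A. g a * l a) + (\<Sum>a\<in>A. f a * l a) * (\<Sum>a\<in>A. g a * h a)) / 2"
proof -
  have pointwise: "sym_tensor f g p * sym_tensor h l p =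
     ((f (fst p) * h (fst p)) * (g (snd p) * l (snd p)) +
      (f (fst p) * l (fst p)) * (g (snd p) * h (snd p)) +
      (g (fst p) * h (fst p)) * (f (snd p) * l (snd p)) +
      (g (fst p) * l (fst p)) * (f (snd p) * h (snd p))) / 4" for p
    unfolding sym_tensor_def by (simp add: algebra_simps)
  show ?thesis
    by (simp only: pointwise sum_divide_distrib[symmetric] sum.distrib
        sum_Times_mult[of "\<lambda>a. f a * h a" "\<lambda>b. g b * l b"]
        sum_Times_mult[of "\<lambda>a. f a * l a" "\<lambda>b. g b * h b"]
        sum_Times_mult[of "\<lambda>a. g a * h a" "\<lambda>b. f b * l b"]
        sum_Times_mult[of "\<lambda>a. g a * l a" "\<lambda>b. f b * h b"])
      (simp add: algebra_simps)
qed

lemma sum_Times_kronecker: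
  fixes f g h l :: "'a \<Rightarrow> 'b::comm_semiring_0"
  shows "(\<Sum>q\<in>A \<times> A. (f (fst q) * g (snd q)) * (h (fst q) * l (snd q))) =
    (\<Sum>c\<in>A. f c * h c) * (\<Sum>d\<in>A. g d * l d)"
  using sum_Times_mult[of "\<lambda>c. f c * h c" "\<lambda>d. g d * l d" A] by (simp add: mult_ac)

lemma frobenius_sym_square:
  assumes F_sym: "\<And>a b. a \<in> A \<Longrightarrow> b \<in> A \<Longrightarrow> F a b = F b a"
    and F_idem: "\<And>a b. a \<in> A \<Longrightarrow> b \<in> A \<Longrightarrow> (\<Sum>c\<in>A. F a c * F c b) = F a b"
  shows "(\<Sum>p\<in>A \<times> A. \<Sum>q\<in>A \<times> A. (sym_square F p q)\<^sup>2) =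
    ((\<Sum>a\<in>A. F a a)\<^sup>2 + (\<Sum>a\<in>A. F a a)) / 2"
proof -
  let ?T = "\<Sum>a\<in>A. F a a"
  have F_inner: "(\<Sum>c\<in>A. F a c * F b c) = F a b" if "a \<in> A" "b \<in> A" for a b
    using F_idem[OF that] that F_sym by (metis (no_types, lifting) sum.cong)
  define X where "X p q = F (fst p) (fst q) * F (snd p) (snd q)" for p q :: "'a \<times> 'a"
  define Y where "Y p q = F (snd p) (fst q) * F (fst p) (snd q)" for p q :: "'a \<times> 'a"
  have XX: "(\<Sum>q\<in>A \<times> A. X p q * X p q) = F (fst p) (fst p) * F (snd p) (snd p)"
    and YY: "(\<Sum>q\<in>A \<times> A. Y p q * Y p q) = F (fst p) (fst p) * F (snd p) (snd p)"
    and XY: "(\<Sum>q\<in>A \<times> A. X p q * Y p q) = F (fst p) (snd p) * F (snd p) (fst p)" if "p \<in> A \<times> A" for p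
    using that unfolding X_def Y_def by (subst sum_Times_kronecker, force simp: F_inner)+
  have square: "(sym_square F p q)\<^sup>2 = (X p q * X p q + Y p q * Y p q + 2 * (X p q * Y p q)) / 4" for p q
    unfolding sym_square_def X_def Y_def by (simp add: power2_eq_square algebra_simps)
  have "(\<Sum>p\<in>A \<times> A. \<Sum>q\<in>A \<times> A. (sym_square F p q)\<^sup>2) =
    (\<Sum>p\<in>A \<times> A. ((\<Sum>q\<in>A \<times> A. X p q * X p q) + (\<Sum>q\<in>A \<times> A. Y p q * Y p q)
      + 2 * (\<Sum>q\<in>A \<times> A. X p q * Y p q)) / 4)"
    by (simp only: square sum.distrib sum_divide_distrib[symmetric] sum_distrib_left[symmetric])
  also have "\<dots> = (\<Sum>p\<in>A \<times> A. (F (fst p) (fst p) * F (snd p) (snd p) + F (fst p) (fst p) * F (snd p) (snd p)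
      + 2 * (F (fst p) (snd p) * F (snd p) (fst p))) / 4)"
    by (intro sum.cong refl) (simp add: XX YY XY)
  also have "\<dots> = (?T * ?T + ?T * ?T + 2 * (\<Sum>a\<in>A. \<Sum>b\<in>A. F a b * F b a)) / 4"
    by (simp only: sum.distrib sum_divide_distrib[symmetric] sum_distrib_left[symmetric]
        sum_Times_mult[of "\<lambda>a. F a a" "\<lambda>a. F a a"] sum.cartesian_product split_def)
  also have "(\<Sum>a\<in>A. \<Sum>b\<in>A. F a b * F b a) = ?T"
    by (intro sum.cong refl) (simp add: F_idem)
  finally show ?thesis by (simp add: power2_eq_square)
qed

lemma gram_quadratic_form_nonneg:
  fixes x :: "nat \<Rightarrow> real"
  shows "(\<Sum>i<n. \<Sum>j<n. x i * x j * (\<Sum>a\<in>A. Y i a * Y j a)) \<ge> 0"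
proof -
  have "(\<Sum>i<n. \<Sum>j<n. x i * x j * (\<Sum>a\<in>A. Y i a * Y j a)) = (\<Sum>a\<in>A. (\<Sum>i<n. x i * Y i a)\<^sup>2)"
    by (simp add: power2_eq_square sum_product sum_distrib_left mult_ac sum.swap[of _ A])
  then show ?thesis by (simp add: sum_nonneg)
qed

locale gram_inverse =
  fixes I :: "'a set" and n :: nat and Y :: "nat \<Rightarrow> 'a \<Rightarrow> real" and H :: "nat \<Rightarrow> nat \<Rightarrow> real"
  assumes H_sym: "\<And>i j. i < n \<Longrightarrow> j < n \<Longrightarrow> H i j = H j i"
    and H_inverse: "\<And>i l. i < n \<Longrightarrow> l < n \<Longrightarrow>
      (\<Sum>j<n. (\<Sum>a\<in>I. Y i a * Y j a) * H j l) = of_bool (i = l)"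
begin

definition dual :: "nat \<Rightarrow> 'a \<Rightarrow> real" where
  "dual i a = (\<Sum>j<n. H i j * Y j a)"

lemma inner_dual:
  assumes "i < n" "l < n"
  shows "(\<Sum>a\<in>I. Y i a * dual l a) = of_bool (i = l)"
proof -
  have "(\<Sum>a\<in>I. Y i a * dual l a) = (\<Sum>a\<in>I. \<Sum>j<n. H l j * (Y i a * Y j a))"
    unfolding dual_def by (simp add: sum_distrib_left mult_ac)
  also have "\<dots> = (\<Sum>j<n. \<Sum>a\<in>I. H l j * (Y i a * Y j a))" by (rule sum.swap)
  also have "\<dots> = (\<Sum>j<n. (\<Sum>a\<in>I. Y i a * Y j a) * H j l)"
    by (intro sum.cong refl) (simp add: sum_distrib_left[symmetric] H_sym[OF assms(2)] mult.commute)
  finally show ?thesis using H_inverse[OF assms] by simp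
qed

lemma inner_dual_dual:
  assumes "i < n" "l < n"
  shows "(\<Sum>a\<in>I. dual i a * dual l a) = H i l"
proof -
  have "(\<Sum>a\<in>I. dual i a * dual l a) = (\<Sum>a\<in>I. \<Sum>j<n. H l j * (Y j a * dual i a))"
    unfolding dual_def[of l] by (simp add: sum_distrib_left sum_distrib_right mult_ac)
  also have "\<dots> = (\<Sum>j<n. \<Sum>a\<in>I. H l j * (Y j a * dual i a))" by (rule sum.swap)
  also have "\<dots> = (\<Sum>j<n. H l j * of_bool (j = i))"
    by (intro sum.cong refl) (simp add: sum_distrib_left[symmetric] inner_dual assms)
  finally show ?thesis using assms H_sym by (simp add: sum_of_bool_eq_mult_right)
qed

text \<open>If the \<open>n\<close> vectors \<open>Y i\<close> are fixed by \<open>P\<close> and have an invertible Gram matrix,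
  then \<open>Q = \<Sum>i. Y i \<otimes> dual i\<close> satisfies \<open>\<langle>P, Q\<rangle> = \<parallel>Q\<parallel>\<^sup>2 = n\<close>; Cauchy-Schwarz
  then bounds \<open>n\<close> by \<open>\<parallel>P\<parallel>\<^sup>2\<close>, which is the rank of \<open>P\<close> if \<open>P\<close> is a projection.\<close>

lemma card_le_frobenius_norm:
  assumes fixed: "\<And>j b. j < n \<Longrightarrow> b \<in> I \<Longrightarrow> (\<Sum>a\<in>I. P a b * Y j a) = Y j b"
  shows "real n \<le> (\<Sum>a\<in>I. \<Sum>b\<in>I. (P a b)\<^sup>2)"
proof -
  define Q where "Q a b = (\<Sum>i<n. Y i a * dual i b)" for a b
  have PQ: "(\<Sum>a\<in>I. \<Sum>b\<in>I. P a b * Q a b) = real n"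
  proof -
    have "(\<Sum>a\<in>I. \<Sum>b\<in>I. P a b * Q a b) = (\<Sum>b\<in>I. \<Sum>a\<in>I. \<Sum>i<n. P a b * Y i a * dual i b)"
      unfolding Q_def by (subst sum.swap) (simp add: sum_distrib_left mult_ac)
    also have "\<dots> = (\<Sum>b\<in>I. \<Sum>i<n. (\<Sum>a\<in>I. P a b * Y i a) * dual i b)"
      by (intro sum.cong refl) (simp add: sum.swap[of _ I] sum_distrib_right)
    also have "\<dots> = (\<Sum>i<n. \<Sum>b\<in>I. Y i b * dual i b)"
      by (subst sum.swap) (intro sum.cong refl, simp add: fixed)
    also have "\<dots> = (\<Sum>i<n. 1)" by (intro sum.cong refl) (simp add: inner_dual)
    finally show ?thesis by simp
  qed
  have QQ: "(\<Sum>a\<in>I. \<Sum>b\<in>I. (Q a b)\<^sup>2) = real n"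
  proof -
    have "(\<Sum>a\<in>I. \<Sum>b\<in>I. (Q a b)\<^sup>2) =
        (\<Sum>a\<in>I. \<Sum>i<n. \<Sum>l<n. \<Sum>b\<in>I. (Y i a * Y l a) * (dual i b * dual l b))"
      unfolding Q_def power2_eq_square
      by (intro sum.cong refl) (simp add: sum_product sum_distrib_left mult_ac sum.swap[of _ I])
    also have "\<dots> = (\<Sum>a\<in>I. \<Sum>i<n. \<Sum>l<n. (Y i a * Y l a) * H i l)"
      by (intro sum.cong refl) (simp add: sum_distrib_left[symmetric] inner_dual_dual)
    also have "\<dots> = (\<Sum>i<n. \<Sum>l<n. (\<Sum>a\<in>I. Y i a * Y l a) * H l i)"
      by (subst sum.swap) (intro sum.cong refl, subst sum.swap, simp add: sum_distrib_right H_sym)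
    also have "\<dots> = (\<Sum>i<n. 1)" by (intro sum.cong refl) (simp add: H_inverse)
    finally show ?thesis by simp
  qed
  have pairs: "(\<Sum>p\<in>I \<times> I. f (fst p) (snd p)) = (\<Sum>a\<in>I. \<Sum>b\<in>I. f a b)"
    for f :: "'a \<Rightarrow> 'a \<Rightarrow> real"
    by (simp add: sum.cartesian_product split_def)
  have "(real n)\<^sup>2 \<le> (\<Sum>a\<in>I. \<Sum>b\<in>I. (P a b)\<^sup>2) * real n"
    using Cauchy_Schwarz_ineq_sum[of "\<lambda>p. P (fst p) (snd p)" "\<lambda>p. Q (fst p) (snd p)" "I \<times> I"]
      pairs[of "\<lambda>a b. P a b * Q a b"] pairs[of "\<lambda>a b. (P a b)\<^sup>2"] pairs[of "\<lambda>a b. (Q a b)\<^sup>2"]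
    by (simp add: PQ QQ)
  then show ?thesis
    by (cases "n = 0") (simp_all add: sum_nonneg power2_eq_square)
qed

end

section \<open>Traces and eigenvalues\<close>

definition mat_trace :: "'a::comm_ring_1 mat \<Rightarrow> 'a" where
  "mat_trace A = (\<Sum>i<dim_row A. A $$ (i, i))"

lemma index_mult_mat_sum:
  assumes "A \<in> carrier_mat n m" "B \<in> carrier_mat m l" "i < n" "j < l"
  shows "(A * B) $$ (i, j) = (\<Sum>k<m. A $$ (i, k) * B $$ (k, j))"
  using assms by (simp add: scalar_prod_def atLeast0LessThan)

lemma mat_trace_mult_comm:
  assumes A: "A \<in> carrier_mat n m" and B: "B \<in> carrier_mat m n"
  shows "mat_trace (A * B) = mat_trace (B * A)"
proof -
  have "mat_trace (A * B) = (\<Sum>i<n. \<Sum>k<m. A $$ (i, k) * B $$ (k, i))"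
    unfolding mat_trace_def using A B by (auto simp: scalar_prod_def atLeast0LessThan intro!: sum.cong)
  also have "\<dots> = (\<Sum>k<m. \<Sum>i<n. B $$ (k, i) * A $$ (i, k))"
    by (subst sum.swap) (simp add: mult.commute)
  also have "\<dots> = mat_trace (B * A)"
    unfolding mat_trace_def using A B by (auto simp: scalar_prod_def atLeast0LessThan intro!: sum.cong)
  finally show ?thesis .
qed

lemma mat_trace_similar:
  assumes "similar_mat_wit A B P Q" "A \<in> carrier_mat n n"
  shows "mat_trace A = mat_trace B"
proof -
  from similar_mat_witD2[OF assms(2,1)] have B: "B \<in> carrier_mat n n" and P: "P \<in> carrier_mat n n"
    and Q: "Q \<in> carrier_mat n n" and QP: "Q * P = 1\<^sub>m n" and AE: "A = P * B * Q" by auto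
  have "mat_trace A = mat_trace ((P * B) * Q)" using AE by simp
  also have "\<dots> = mat_trace (Q * (P * B))" using P B Q by (intro mat_trace_mult_comm) auto
  also have "Q * (P * B) = B" using P B Q QP by (simp flip: assoc_mult_mat)
  finally show ?thesis .
qed

lemma diag_mult_upper_triangular:
  assumes "upper_triangular B" "upper_triangular C" "B \<in> carrier_mat n n" "C \<in> carrier_mat n n" "i < n"
  shows "(B * C) $$ (i, i) = B $$ (i, i) * C $$ (i, i)"
proof -
  have "(B * C) $$ (i, i) = (\<Sum>k<n. B $$ (i, k) * C $$ (k, i))"
    using assms by (intro index_mult_mat_sum)
  also have "\<dots> = (\<Sum>k<n. if k = i then B $$ (i, i) * C $$ (i, i) else 0)"
  proof (intro sum.cong refl)
    fix k assume "k \<in> {..<n}"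
    then show "B $$ (i, k) * C $$ (k, i) = (if k = i then B $$ (i, i) * C $$ (i, i) else 0)"
      using assms by (cases k i rule: linorder_cases) (auto simp: upper_triangular_def)
  qed
  finally show ?thesis using assms(5) by simp
qed

lemma proots_prod_linear_factors:
  "proots (\<Prod>a\<leftarrow>es. [:- a, 1:]) = mset es"
proof (induction es)
  case (Cons a es)
  have "(\<Prod>a\<leftarrow>es. [:- a, 1:]) \<noteq> 0" by (auto simp: prod_list_zero_iff)
  then have "proots ([:- a, 1:] * (\<Prod>a\<leftarrow>es. [:- a, 1:])) = proots [:- a, 1:] + mset es"
    by (subst proots_mult) (simp_all add: Cons)
  also have "proots [:- a, 1:] = {#a#}" using proots_linear_factor[of "- a"] by simp
  finally show ?case by simp
qed simp

lemma eigenvalue_power_sums: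
  fixes A :: "complex mat"
  assumes A: "A \<in> carrier_mat n n"
  shows "size (proots (char_poly A)) = n"
    and "(\<Sum>e\<in>#proots (char_poly A). e) = mat_trace A"
    and "(\<Sum>e\<in>#proots (char_poly A). e\<^sup>2) = mat_trace (A * A)"
proof -
  obtain es where cp: "char_poly A = (\<Prod>a\<leftarrow>es. [:- a, 1:])" and len: "length es = n"
    using char_poly_factorized[OF A] by blast
  obtain B P Q where sd: "schur_decomposition A es = (B, P, Q)" by (cases "schur_decomposition A es") auto
  from schur_decomposition[OF A cp sd]
  have sim: "similar_mat_wit A B P Q" and ut: "upper_triangular B" and dg: "diag_mat B = es" by auto
  from similar_mat_witD2[OF A sim] have B: "B \<in> carrier_mat n n" by auto
  have roots: "proots (char_poly A) = mset es" unfolding cp by (rule proots_prod_linear_factors)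
  have es_nth: "es ! i = B $$ (i, i)" if "i < n" for i
    using dg[symmetric] that B unfolding diag_mat_def by auto
  have power_sum: "(\<Sum>e\<in>#proots (char_poly A). f e) = (\<Sum>i<n. f (B $$ (i, i)))" for f
  proof -
    have "(\<Sum>e\<in>#proots (char_poly A). f e) = sum_list (map f es)"
      unfolding roots by (simp flip: mset_map sum_mset_sum_list)
    also have "\<dots> = (\<Sum>i<n. f (es ! i))" using len by (simp add: sum_list_sum_nth atLeast0LessThan)
    finally show ?thesis using es_nth by simp
  qed
  show "size (proots (char_poly A)) = n" by (simp add: roots len)
  show "(\<Sum>e\<in>#proots (char_poly A). e) = mat_trace A"
    using power_sum[of "\<lambda>e. e"] mat_trace_similar[OF sim A] B by (simp add: mat_trace_def)
  have "similar_mat_wit (A ^\<^sub>m 2) (B ^\<^sub>m 2) P Q" by (rule similar_mat_wit_pow[OF sim])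
  moreover have "A ^\<^sub>m 2 = A * A" "B ^\<^sub>m 2 = B * B" using A B by (simp_all add: numeral_2_eq_2)
  ultimately have "mat_trace (A * A) = mat_trace (B * B)" using A by (intro mat_trace_similar) auto
  also have "mat_trace (B * B) = (\<Sum>i<n. (B $$ (i, i))\<^sup>2)"
  proof -
    have "dim_row (B * B) = n" using B by simp
    moreover have "(B * B) $$ (i, i) = (B $$ (i, i))\<^sup>2" if "i < n" for i
      using diag_mult_upper_triangular[OF ut ut B B that] by (simp add: power2_eq_square)
    ultimately show ?thesis unfolding mat_trace_def by simp
  qed
  finally show "(\<Sum>e\<in>#proots (char_poly A). e\<^sup>2) = mat_trace (A * A)"
    using power_sum[of "\<lambda>e. e\<^sup>2"] by simp
qed

lemma sum_mset_by_count:
  assumes "finite S" "set_mset M \<subseteq> S"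
  shows "(\<Sum>x\<in>#M. f x) = (\<Sum>x\<in>S. of_nat (count M x) * f x)"
  using assms(2)
proof (induction M)
  case empty then show ?case by simp
next
  case (add y M)
  then have "y \<in> S" by simp
  have "(\<Sum>x\<in>S. of_nat (count (add_mset y M) x) * f x) =
      (\<Sum>x\<in>S. of_nat (count M x) * f x + (if x = y then f x else 0))"
    by (intro sum.cong refl) (simp add: algebra_simps)
  also have "\<dots> = (\<Sum>x\<in>S. of_nat (count M x) * f x) + (\<Sum>x\<in>S. if x = y then f x else 0)"
    by (rule sum.distrib)
  also have "(\<Sum>x\<in>S. if x = y then f x else 0) = f y" using assms(1) \<open>y \<in> S\<close> by simp
  finally show ?case using add by (simp add: add.commute)
qed

section \<open>Strongly regular graphs\<close>

locale prim_srg =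
  fixes v :: nat and E :: "nat \<Rightarrow> nat \<Rightarrow> bool" and k lam mu :: nat
  assumes primitive: "primitive_srg v E k lam mu"
begin

abbreviation "K \<equiv> real k"
abbreviation "L \<equiv> real lam"
abbreviation "M \<equiv> real mu"
abbreviation "V \<equiv> real v"

lemma srg: "strongly_regular v E k lam mu"
  and connected: "connected_graph v E"
  and co_connected: "connected_graph v (complement_graph E)"
  using primitive unfolding primitive_srg_def by simp_all

lemma simple: "simple_graph v E"
  and degree_all: "\<forall>i<v. card {j. j < v \<and> E i j} = k"
  and common_adjacent_all: "\<forall>i<v. \<forall>j<v. E i j \<longrightarrow> card {l. l < v \<and> E i l \<and> E j l} = lam"
  and common_nonadjacent_all:
    "\<forall>i<v. \<forall>j<v. i \<noteq> j \<and> \<not> E i j \<longrightarrow> card {l. l < v \<and> E i l \<and> E j l} = mu"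
  using srg unfolding strongly_regular_def by simp_all

lemma irrefl: "i < v \<Longrightarrow> \<not> E i i"
  using simple unfolding simple_graph_def by blast

lemma sym: "i < v \<Longrightarrow> j < v \<Longrightarrow> E i j = E j i"
  using simple unfolding simple_graph_def by blast

lemma degree: "i < v \<Longrightarrow> card {j. j < v \<and> E i j} = k"
  using degree_all by blast

lemma common_adjacent: "i < v \<Longrightarrow> j < v \<Longrightarrow> E i j \<Longrightarrow> card {l. l < v \<and> E i l \<and> E j l} = lam"
  using common_adjacent_all by blast

lemma common_nonadjacent:
  "i < v \<Longrightarrow> j < v \<Longrightarrow> i \<noteq> j \<Longrightarrow> \<not> E i j \<Longrightarrow> card {l. l < v \<and> E i l \<and> E j l} = mu"
  using common_nonadjacent_all by blast

lemma non_edge: "\<exists>i<v. \<exists>j<v. i \<noteq> j \<and> \<not> E i j"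
  using srg unfolding strongly_regular_def by (elim conjE)

lemma edge: "\<exists>i<v. \<exists>j<v. E i j"
  using srg unfolding strongly_regular_def by (elim conjE)

lemma v_pos: "0 < v" using edge by auto

definition adj :: "nat \<Rightarrow> nat \<Rightarrow> real" where
  "adj i j = of_bool (E i j)"

lemma adj_sym: "i < v \<Longrightarrow> j < v \<Longrightarrow> adj i j = adj j i"
  by (simp add: adj_def sym)

lemma row_sum_adj: "i < v \<Longrightarrow> (\<Sum>l<v. adj i l) = K"
  using card_filter_lessThan_eq_sum[of v "E i"] degree[of i] by (simp add: adj_def)

lemma col_sum_adj: "j < v \<Longrightarrow> (\<Sum>l<v. adj l j) = K"
  using row_sum_adj[of j] by (simp add: adj_sym)

lemma sum_adj_adj:
  assumes "i < v" "j < v"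
  shows "(\<Sum>l<v. adj i l * adj l j) = (if i = j then K else if E i j then L else M)"
proof -
  have "(\<Sum>l<v. adj i l * adj l j) = (\<Sum>l<v. of_bool (E i l \<and> E j l))"
    using assms by (intro sum.cong refl) (auto simp: adj_def sym)
  also have "\<dots> = real (card {l. l < v \<and> E i l \<and> E j l})"
    by (rule card_filter_lessThan_eq_sum[symmetric])
  finally show ?thesis using assms degree common_adjacent common_nonadjacent by auto
qed

lemma count_non_neighbours:
  assumes "i < v"
  shows "(\<Sum>j<v. of_bool (j \<noteq> i \<and> \<not> E i j)) = V - 1 - K"
proof -
  have "(\<Sum>j<v. of_bool (j = i) + adj i j + of_bool (j \<noteq> i \<and> \<not> E i j)) = (\<Sum>j<v. 1::real)"
    using irrefl[OF assms] by (intro sum.cong refl) (auto simp: adj_def)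
  then show ?thesis using assms row_sum_adj[OF assms] by (simp add: sum.distrib)
qed

text \<open>Counting walks of length two from a vertex in two ways.\<close>

lemma feasibility: "K * K = K + L * K + M * (V - 1 - K)"
proof -
  have "(\<Sum>j<v. \<Sum>l<v. adj 0 l * adj l j) = (\<Sum>l<v. adj 0 l * (\<Sum>j<v. adj l j))"
    by (subst sum.swap) (simp add: sum_distrib_left)
  also have "\<dots> = K * K"
    using v_pos by (simp add: row_sum_adj sum_distrib_right[symmetric])
  finally have "(\<Sum>j<v. \<Sum>l<v. adj 0 l * adj l j) = K * K" .
  moreover have "(\<Sum>j<v. \<Sum>l<v. adj 0 l * adj l j) = (\<Sum>j<v. K * of_bool (j = 0)
      + L * adj 0 j + M * of_bool (j \<noteq> 0 \<and> \<not> E 0 j))"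
    using v_pos irrefl[OF v_pos] by (intro sum.cong refl, subst sum_adj_adj) (auto simp: adj_def)
  ultimately show ?thesis
    using v_pos count_non_neighbours[OF v_pos] row_sum_adj[OF v_pos]
    by (simp add: sum.distrib sum_distrib_left[symmetric])
qed

text \<open>For \<open>\<mu> = 0\<close> adjacency would be transitive on distinct vertices, so a connected graph
  would be complete.\<close>

lemma mu_pos: "0 < mu"
proof (rule ccontr)
  assume "\<not> 0 < mu"
  then have mu0: "mu = 0" by simp
  have "i = j \<or> E i j" if "(\<lambda>a b. a < v \<and> b < v \<and> E a b)\<^sup>*\<^sup>* i j" "i < v" for i j
    using that
  proof (induction rule: rtranclp_induct)
    case (step j l)
    then have jl: "j < v" "l < v" "E j l" and "i = j \<or> E i j" by auto
    from \<open>i = j \<or> E i j\<close> show ?case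
    proof
      assume ij: "E i j"
      have "j \<in> {x. x < v \<and> E i x \<and> E l x}" using ij jl sym[of j l] by auto
      then have "card {x. x < v \<and> E i x \<and> E l x} \<noteq> 0"
        by (metis card_0_eq empty_iff finite_Collect_conjI finite_Collect_less_nat)
      then show ?thesis using common_nonadjacent[of i l] step.prems jl mu0 by auto
    qed (use jl in simp)
  qed simp
  moreover obtain i j where "i < v" "j < v" "i \<noteq> j" "\<not> E i j" using non_edge by blast
  ultimately show False using connected unfolding connected_graph_def by blast
qed

text \<open>For \<open>\<mu> = k\<close> non-adjacent vertices would have the same neighbours, hence so would all
  vertices, since the complement is connected; but adjacent vertices cannot.\<close>

lemma mu_lt_k: "mu < k"
proof -
  obtain i j where ij: "i < v" "j < v" "i \<noteq> j" "\<not> E i j" using non_edge by blast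
  have "card {l. l < v \<and> E i l \<and> E j l} \<le> card {l. l < v \<and> E i l}" by (rule card_mono) auto
  then have "mu \<le> k" using common_nonadjacent[OF ij] degree[OF ij(1)] by simp
  moreover have "mu \<noteq> k"
  proof
    assume mu_k: "mu = k"
    have same_nbrs: "{l. l < v \<and> E a l} = {l. l < v \<and> E b l}"
      if "a < v" "b < v" "a \<noteq> b" "\<not> E a b" for a b
    proof -
      let ?S = "{l. l < v \<and> E a l \<and> E b l}"
      have card_S: "card ?S = k" using common_nonadjacent[OF that] mu_k by simp
      have "?S = {l. l < v \<and> E a l}"
        by (rule card_subset_eq) (auto simp: card_S degree \<open>a < v\<close>)
      moreover have "?S = {l. l < v \<and> E b l}"
        by (rule card_subset_eq) (auto simp: card_S degree \<open>b < v\<close>)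
      ultimately show ?thesis by simp
    qed
    have "{l. l < v \<and> E i l} = {l. l < v \<and> E j l}"
      if "(\<lambda>a b. a < v \<and> b < v \<and> complement_graph E a b)\<^sup>*\<^sup>* i j" for i j
      using that by (induction rule: rtranclp_induct) (auto simp: complement_graph_def same_nbrs)
    moreover obtain i j where "i < v" "j < v" "E i j" using edge by blast
    ultimately show False using co_connected irrefl unfolding connected_graph_def by blast
  qed
  ultimately show ?thesis by simp
qed

lemma k_add_2_le_v: "k + 2 \<le> v"
proof -
  obtain i j where ij: "i < v" "j < v" "i \<noteq> j" "\<not> E i j" using non_edge by blast
  have "{l. l < v \<and> E i l} \<subseteq> {..<v} - {i, j}" using ij irrefl[OF ij(1)] by auto
  then have "card {l. l < v \<and> E i l} \<le> card ({..<v} - {i, j})" by (intro card_mono) auto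
  also have "\<dots> = v - 2" using ij by (simp add: card_Diff_subset)
  finally show ?thesis using degree[OF ij(1)] ij by linarith
qed

text \<open>The eigenvalues of the adjacency matrix on the complement of the all-ones vector are the
  roots \<open>r > 0 > s\<close> of \<open>x\<^sup>2 - (\<lambda> - \<mu>) x - (k - \<mu>)\<close>.\<close>

definition disc :: real where "disc = (L - M)\<^sup>2 + 4 * (K - M)"
definition r :: real where "r = (L - M + sqrt disc) / 2"
definition s :: real where "s = (L - M - sqrt disc) / 2"

lemma disc_pos: "0 < disc"
  using mu_lt_k unfolding disc_def by (simp add: add_nonneg_pos)

lemma r_add_s: "r + s = L - M"
  unfolding r_def s_def by (simp add: field_simps)

lemma r_mult_s: "r * s = M - K"
proof -
  have "r * s = ((L - M)\<^sup>2 - (sqrt disc)\<^sup>2) / 4"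
    unfolding r_def s_def by (simp add: power2_eq_square algebra_simps)
  then show ?thesis using disc_pos unfolding disc_def by simp
qed

lemma s_lt_r: "s < r"
  unfolding r_def s_def using disc_pos by simp

lemma restricted_root:
  assumes "t = r \<or> t = s"
  shows "t\<^sup>2 = (L - M) * t + (K - M)"
proof -
  have "t\<^sup>2 = (r + s) * t - r * s" using assms by (auto simp: power2_eq_square algebra_simps)
  then show ?thesis unfolding r_add_s r_mult_s by simp
qed

lemma r_pos: "0 < r" and s_neg: "s < 0"
proof -
  have "r * s < 0" using r_mult_s mu_lt_k by simp
  then show "0 < r" "s < 0" using s_lt_r by (auto simp: mult_less_0_iff)
qed

lemma K_sub_r_mult_K_sub_s: "(K - r) * (K - s) = M * V"
proof -
  have "(K - r) * (K - s) = K * K - K * (r + s) + r * s" by (simp add: algebra_simps)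
  also have "\<dots> = K * K - K * (L - M) + (M - K)" by (simp only: r_add_s r_mult_s)
  also have "\<dots> = M * V" using feasibility by (simp add: algebra_simps)
  finally show ?thesis .
qed

lemma r_lt_K: "r < K"
proof -
  have "0 < (K - r) * (K - s)" unfolding K_sub_r_mult_K_sub_s using mu_pos v_pos by simp
  then show ?thesis using s_neg by (simp add: zero_less_mult_iff)
qed

lemma neg_K_lt_s: "- K < s"
proof -
  have "(K + r) * (K + s) = K * K + K * (r + s) + r * s" by (simp add: algebra_simps)
  also have "\<dots> = K * K + K * (L - M) + (M - K)" by (simp only: r_add_s r_mult_s)
  finally have "(K + r) * (K + s) = K * (K + L - M - 1) + M" by (simp add: algebra_simps)
  moreover have "0 \<le> K * (K + L - M - 1)" using mu_lt_k by simp
  ultimately have "0 < (K + r) * (K + s)" using mu_pos by linarith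
  then show ?thesis using r_pos by (simp add: zero_less_mult_iff)
qed

lemma restricted_ne_minus_1:
  assumes "t = r \<or> t = s"
  shows "t \<noteq> -1"
proof
  assume "t = -1"
  then have "L = K - 1" using restricted_root[OF assms] by (simp add: power2_eq_square)
  then have "L * K = (K - 1) * K" by simp
  then have "L * K = K * K - K" by (simp add: algebra_simps)
  then have "M * (V - 1 - K) = 0" using feasibility by linarith
  then show False using mu_pos k_add_2_le_v by simp
qed

section \<open>The Bose-Mesner algebra\<close>

text \<open>\<open>bm x y z\<close> is the matrix \<open>x I + y A + z J\<close>; it acts as \<open>bm_char_J x y z\<close> on the all-ones
  vector and as \<open>bm_char t x y\<close> on the eigenvectors of \<open>A\<close> orthogonal to it with eigenvalue \<open>t\<close>.\<close>

definition bm :: "real \<Rightarrow> real \<Rightarrow> real \<Rightarrow> nat \<Rightarrow> nat \<Rightarrow> real" where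
  "bm x y z i j = x * of_bool (i = j) + y * adj i j + z"

definition bm_char :: "real \<Rightarrow> real \<Rightarrow> real \<Rightarrow> real" where
  "bm_char t x y = x + y * t"

definition bm_char_J :: "real \<Rightarrow> real \<Rightarrow> real \<Rightarrow> real" where
  "bm_char_J x y z = x + y * K + z * V"

lemma bm_sym: "i < v \<Longrightarrow> j < v \<Longrightarrow> bm x y z i j = bm x y z j i"
  by (simp add: bm_def adj_sym eq_commute)

lemma bm_mult_explicit:
  assumes i: "i < v" and j: "j < v"
  shows "(\<Sum>l<v. bm x y z i l * bm x' y' z' l j) =
    bm (x * x' + y * y' * (K - M)) (x * y' + y * x' + y * y' * (L - M))
       (x * z' + z * x' + (y * z' + z * y') * K + z * z' * V + y * y' * M) i j"
proof -
  let ?d = "\<lambda>i j. of_bool (i = j) :: real"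
  have adj_adj: "(\<Sum>l<v. adj i l * adj l j) = (K - M) * ?d i j + (L - M) * adj i j + M"
    using sum_adj_adj[OF i j] irrefl[OF i] by (auto simp: adj_def)
  have "(\<Sum>l<v. bm x y z i l * bm x' y' z' l j) = (\<Sum>l<v. x*x' * (?d i l * ?d l j) + x*y' * (?d i l * adj l j)
      + x*z' * (?d i l * 1) + y*x' * (adj i l * ?d l j) + y*y' * (adj i l * adj l j) + y*z' * adj i l
      + z*x' * (1 * ?d l j) + z*y' * adj l j + z*z' * 1)"
    by (intro sum.cong refl) (simp add: bm_def algebra_simps)
  also have "\<dots> = x*x' * (\<Sum>l<v. ?d i l * ?d l j) + x*y' * (\<Sum>l<v. ?d i l * adj l j)
      + x*z' * (\<Sum>l<v. ?d i l * 1) + y*x' * (\<Sum>l<v. adj i l * ?d l j) + y*y' * (\<Sum>l<v. adj i l * adj l j)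
      + y*z' * (\<Sum>l<v. adj i l) + z*x' * (\<Sum>l<v. 1 * ?d l j) + z*y' * (\<Sum>l<v. adj l j) + z*z' * (\<Sum>l<v. 1)"
    by (simp only: sum.distrib sum_distrib_left)
  also have "\<dots> = x*x' * ?d i j + x*y' * adj i j + x*z' + y*x' * adj i j
      + y*y' * ((K - M) * ?d i j + (L - M) * adj i j + M) + y*z' * K + z*x' + z*y' * K + z*z' * V"
    by (simp only: sum_of_bool_eq_mult_left[OF i] sum_of_bool_eq_mult_right[OF j] adj_adj
        row_sum_adj[OF i] col_sum_adj[OF j]) simp
  finally show ?thesis by (simp add: bm_def algebra_simps)
qed

lemma bm_eqI:
  assumes "bm_char r x y = bm_char r x' y'" "bm_char s x y = bm_char s x' y'"
    and "bm_char_J x y z = bm_char_J x' y' z'"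
  shows "bm x y z = bm x' y' z'"
proof -
  from assms(1,2) have "(y - y') * (r - s) = 0" by (simp add: bm_char_def algebra_simps)
  then have y: "y = y'" using s_lt_r by simp
  with assms(1) have x: "x = x'" by (simp add: bm_char_def)
  with assms(3) y have "z * V = z' * V" by (simp add: bm_char_J_def)
  then have "z = z'" using v_pos by simp
  with x y show ?thesis by simp
qed

text \<open>The three characters identify the algebra with \<open>\<real>\<^sup>3\<close> under pointwise multiplication.\<close>

lemma bm_mult:
  assumes "i < v" "j < v"
    and "bm_char r x y * bm_char r x' y' = bm_char r a b"
    and "bm_char s x y * bm_char s x' y' = bm_char s a b"
    and "bm_char_J x y z * bm_char_J x' y' z' = bm_char_J a b c"
  shows "(\<Sum>l<v. bm x y z i l * bm x' y' z' l j) = bm a b c i j"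
proof -
  have char: "bm_char t (x * x' + y * y' * (K - M)) (x * y' + y * x' + y * y' * (L - M)) =
      bm_char t x y * bm_char t x' y'" if "t = r \<or> t = s" for t
  proof -
    have tt: "t * t = (L - M) * t + (K - M)" using restricted_root[OF that] by (simp add: power2_eq_square)
    have "bm_char t x y * bm_char t x' y' = x * x' + (x * y' + y * x') * t + y * y' * (t * t)"
      by (simp add: bm_char_def algebra_simps)
    then show ?thesis unfolding tt by (simp add: bm_char_def algebra_simps)
  qed
  have KK: "K * K = (K - M) + (L - M) * K + M * V" using feasibility by (simp add: algebra_simps)
  have "bm_char_J x y z * bm_char_J x' y' z' = x * x' + (x * y' + y * x') * K + y * y' * (K * K)
      + (x * z' + z * x') * V + (y * z' + z * y') * K * V + z * z' * V * V"
    by (simp add: bm_char_J_def algebra_simps)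
  then have "bm_char_J (x * x' + y * y' * (K - M)) (x * y' + y * x' + y * y' * (L - M))
      (x * z' + z * x' + (y * z' + z * y') * K + z * z' * V + y * y' * M) = bm_char_J x y z * bm_char_J x' y' z'"
    unfolding KK by (simp add: bm_char_J_def algebra_simps)
  moreover have "bm_char t x y * bm_char t x' y' = bm_char t a b" if "t = r \<or> t = s" for t
    using assms(3,4) that by auto
  ultimately have "bm (x * x' + y * y' * (K - M)) (x * y' + y * x' + y * y' * (L - M))
      (x * z' + z * x' + (y * z' + z * y') * K + z * z' * V + y * y' * M) = bm a b c"
    using assms(5) char by (intro bm_eqI) simp_all
  then show ?thesis using bm_mult_explicit[OF assms(1,2)] by simp
qed

lemma bm_eq_0:
  assumes "\<forall>i<v. \<forall>j<v. bm x y z i j = 0"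
  shows "x = 0 \<and> y = 0 \<and> z = 0"
proof -
  obtain i j where ij: "i < v" "j < v" "i \<noteq> j" "\<not> E i j" using non_edge by blast
  obtain i' j' where ij': "i' < v" "j' < v" "E i' j'" using edge by blast
  have "bm x y z i j = 0" "bm x y z i' j' = 0" "bm x y z i i = 0" using assms ij ij' by blast+
  moreover have "i' \<noteq> j'" using ij' irrefl by auto
  ultimately have "z = 0" "y + z = 0" "x + z = 0" using ij ij' irrefl[OF ij(1)] by (simp_all add: bm_def adj_def)
  then show ?thesis by simp
qed

text \<open>Coefficients of the primitive idempotent for the restricted eigenvalue \<open>t\<close>, the other one
  being \<open>t'\<close>: it is the interpolation polynomial \<open>(A - t' I - ((k - t') / v) J) / (t - t')\<close>
  with characters \<open>1\<close> at \<open>t\<close> and \<open>0\<close> at \<open>t'\<close> and \<open>k\<close>.\<close>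

definition idem_x :: "real \<Rightarrow> real \<Rightarrow> real" where "idem_x t t' = - t' / (t - t')"
definition idem_y :: "real \<Rightarrow> real \<Rightarrow> real" where "idem_y t t' = 1 / (t - t')"
definition idem_z :: "real \<Rightarrow> real \<Rightarrow> real" where "idem_z t t' = - (K - t') / ((t - t') * V)"

lemma idem_chars:
  assumes "t \<noteq> t'"
  shows "bm_char t (idem_x t t') (idem_y t t') = 1"
    and "bm_char t' (idem_x t t') (idem_y t t') = 0"
    and "bm_char_J (idem_x t t') (idem_y t t') (idem_z t t') = 0"
proof -
  have "bm_char t (idem_x t t') (idem_y t t') = t / (t - t') - t' / (t - t')"
    by (simp add: bm_char_def idem_x_def idem_y_def)
  also have "\<dots> = 1" using assms by (simp add: diff_divide_distrib[symmetric])
  finally show "bm_char t (idem_x t t') (idem_y t t') = 1" .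
  show "bm_char t' (idem_x t t') (idem_y t t') = 0"
    by (simp add: bm_char_def idem_x_def idem_y_def)
  have "idem_z t t' * V = - (K - t') / (t - t')" using v_pos by (simp add: idem_z_def)
  then show "bm_char_J (idem_x t t') (idem_y t t') (idem_z t t') = 0"
    by (simp add: bm_char_J_def idem_x_def idem_y_def diff_divide_distrib)
qed

text \<open>A nonzero column of the idempotent \<open>bm px py pz\<close> is an eigenvector of \<open>bm gx gy gz\<close>
  with eigenvalue \<open>\<gamma>\<close>, so coercivity of the quadratic form forces \<open>\<gamma> > 0\<close>.\<close>

lemma bm_eigenvalue_pos:
  assumes coercive: "\<And>u. c * (\<Sum>i<v. (u i)\<^sup>2) \<le> (\<Sum>i<v. \<Sum>j<v. u i * u j * bm gx gy gz i j)"
    and c: "0 < c"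
    and "bm_char r gx gy * bm_char r px py = \<gamma> * bm_char r px py"
    and "bm_char s gx gy * bm_char s px py = \<gamma> * bm_char s px py"
    and "bm_char_J gx gy gz * bm_char_J px py pz = \<gamma> * bm_char_J px py pz"
    and nonzero: "bm_char r px py \<noteq> 0 \<or> bm_char s px py \<noteq> 0 \<or> bm_char_J px py pz \<noteq> 0"
  shows "0 < \<gamma>"
proof -
  have "\<not> (\<forall>i<v. \<forall>j<v. bm px py pz i j = 0)"
  proof
    assume "\<forall>i<v. \<forall>j<v. bm px py pz i j = 0"
    then have "px = 0 \<and> py = 0 \<and> pz = 0" by (rule bm_eq_0)
    then show False using nonzero by (simp add: bm_char_def bm_char_J_def)
  qed
  then obtain i0 j0 where ij0: "i0 < v" "j0 < v" "bm px py pz i0 j0 \<noteq> 0" by blast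
  define u where "u i = bm px py pz i j0" for i
  have eigen: "(\<Sum>j<v. bm gx gy gz i j * u j) = \<gamma> * u i" if "i < v" for i
  proof -
    have "bm_char t (\<gamma> * px) (\<gamma> * py) = \<gamma> * bm_char t px py" for t
      by (simp add: bm_char_def algebra_simps)
    moreover have "bm_char_J (\<gamma> * px) (\<gamma> * py) (\<gamma> * pz) = \<gamma> * bm_char_J px py pz"
      by (simp add: bm_char_J_def algebra_simps)
    ultimately have "(\<Sum>j<v. bm gx gy gz i j * u j) = bm (\<gamma> * px) (\<gamma> * py) (\<gamma> * pz) i j0"
      unfolding u_def using that ij0(2) assms(3-5) by (intro bm_mult) simp_all
    then show ?thesis by (simp add: bm_def u_def algebra_simps)
  qed
  have "(\<Sum>i<v. \<Sum>j<v. u i * u j * bm gx gy gz i j) = (\<Sum>i<v. u i * (\<Sum>j<v. bm gx gy gz i j * u j))"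
    by (simp add: sum_distrib_left mult_ac)
  also have "\<dots> = (\<Sum>i<v. \<gamma> * (u i)\<^sup>2)"
    by (intro sum.cong refl) (simp add: eigen power2_eq_square)
  finally have "c * (\<Sum>i<v. (u i)\<^sup>2) \<le> \<gamma> * (\<Sum>i<v. (u i)\<^sup>2)"
    using coercive[of u] by (simp add: sum_distrib_left)
  moreover have "0 < (\<Sum>i<v. (u i)\<^sup>2)"
    using ij0 by (intro sum_pos2[of _ i0]) (simp_all add: u_def)
  ultimately have "c \<le> \<gamma>" by simp
  then show ?thesis using c by simp
qed

lemma bm_chars_pos:
  assumes coercive: "\<And>u. c * (\<Sum>i<v. (u i)\<^sup>2) \<le> (\<Sum>i<v. \<Sum>j<v. u i * u j * bm gx gy gz i j)"
    and c: "0 < c"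
  shows "0 < bm_char r gx gy" and "0 < bm_char s gx gy" and "0 < bm_char_J gx gy gz"
proof -
  have rs: "r \<noteq> s" using s_lt_r by simp
  show "0 < bm_char r gx gy"
    using idem_chars[OF rs]
    by (intro bm_eigenvalue_pos[OF coercive c, where px = "idem_x r s" and py = "idem_y r s" and pz = "idem_z r s"])
      simp_all
  show "0 < bm_char s gx gy"
    using idem_chars[of s r] rs
    by (intro bm_eigenvalue_pos[OF coercive c, where px = "idem_x s r" and py = "idem_y s r" and pz = "idem_z s r"])
      simp_all
  have "bm_char_J 0 0 (1 / V) = 1" using v_pos by (simp add: bm_char_J_def)
  then show "0 < bm_char_J gx gy gz"
    by (intro bm_eigenvalue_pos[OF coercive c, where px = 0 and py = 0 and pz = "1 / V"]) (simp_all add: bm_char_def)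
qed

lemma bm_inverse:
  assumes "bm_char r gx gy \<noteq> 0" "bm_char s gx gy \<noteq> 0" "bm_char_J gx gy gz \<noteq> 0"
  obtains hx hy hz where
    "\<And>i l. i < v \<Longrightarrow> l < v \<Longrightarrow> (\<Sum>j<v. bm gx gy gz i j * bm hx hy hz j l) = of_bool (i = l)"
proof -
  define hy where "hy = (1 / bm_char r gx gy - 1 / bm_char s gx gy) / (r - s)"
  define hx where "hx = 1 / bm_char r gx gy - hy * r"
  define hz where "hz = (1 / bm_char_J gx gy gz - hx - hy * K) / V"
  have "bm_char r hx hy = 1 / bm_char r gx gy" by (simp add: bm_char_def hx_def)
  moreover have "bm_char s hx hy = 1 / bm_char s gx gy"
  proof -
    have "hy * (r - s) = 1 / bm_char r gx gy - 1 / bm_char s gx gy" using s_lt_r by (simp add: hy_def)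
    then show ?thesis by (simp add: bm_char_def hx_def algebra_simps)
  qed
  moreover have "bm_char_J hx hy hz = 1 / bm_char_J gx gy gz"
    using v_pos by (simp add: bm_char_J_def hz_def)
  ultimately have "(\<Sum>j<v. bm gx gy gz i j * bm hx hy hz j l) = bm 1 0 0 i l" if "i < v" "l < v" for i l
    using that assms by (intro bm_mult) (simp_all add: bm_char_def bm_char_J_def)
  moreover have "bm 1 0 0 i l = of_bool (i = l)" for i l by (simp add: bm_def)
  ultimately show ?thesis by (intro that[of hx hy hz]) simp
qed

section \<open>The spectrum\<close>

definition adj_cmat :: "complex mat" where
  "adj_cmat = map_mat complex_of_real (adj_matrix v E)"

lemma adj_cmat_carrier: "adj_cmat \<in> carrier_mat v v"
  by (simp add: adj_cmat_def adj_matrix_def)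

lemma adj_cmat_index: "i < v \<Longrightarrow> j < v \<Longrightarrow> adj_cmat $$ (i, j) = complex_of_real (adj i j)"
  by (simp add: adj_cmat_def adj_matrix_def adj_def)

lemma adj_cmat_mult_vec:
  assumes "x \<in> carrier_vec v" "i < v"
  shows "(adj_cmat *\<^sub>v x) $ i = (\<Sum>j<v. complex_of_real (adj i j) * x $ j)"
proof -
  have "(adj_cmat *\<^sub>v x) $ i = (\<Sum>j<v. row adj_cmat i $ j * x $ j)"
    using assms adj_cmat_carrier by (simp add: scalar_prod_def atLeast0LessThan)
  also have "\<dots> = (\<Sum>j<v. complex_of_real (adj i j) * x $ j)"
    using assms adj_cmat_carrier by (intro sum.cong refl) (simp add: adj_cmat_index)
  finally show ?thesis .
qed

lemma eigenvector_adj_cmat_entry: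
  assumes "eigenvector adj_cmat x e" "i < v"
  shows "(\<Sum>j<v. complex_of_real (adj i j) * x $ j) = e * x $ i"
proof -
  have x: "x \<in> carrier_vec v" and Ax: "adj_cmat *\<^sub>v x = e \<cdot>\<^sub>v x"
    using assms(1) adj_cmat_carrier unfolding eigenvector_def by auto
  show ?thesis using arg_cong[OF Ax, of "\<lambda>y. y $ i"] adj_cmat_mult_vec[OF x assms(2)] x assms(2) by simp
qed

lemma eigenvector_adj_cmat_square:
  assumes x: "eigenvector adj_cmat x e" and i: "i < v"
  shows "e * e * x $ i = complex_of_real (K - M) * x $ i + complex_of_real (L - M) * (e * x $ i)
    + complex_of_real M * (\<Sum>l<v. x $ l)"
proof -
  let ?c = complex_of_real
  have "(\<Sum>j<v. ?c (adj i j) * (e * x $ j)) = e * (\<Sum>j<v. ?c (adj i j) * x $ j)"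
    by (simp add: sum_distrib_left mult_ac)
  then have "e * e * x $ i = (\<Sum>j<v. ?c (adj i j) * (e * x $ j))"
    using eigenvector_adj_cmat_entry[OF x i] by simp
  also have "\<dots> = (\<Sum>j<v. ?c (adj i j) * (\<Sum>l<v. ?c (adj j l) * x $ l))"
    by (intro sum.cong refl) (simp add: eigenvector_adj_cmat_entry[OF x])
  also have "\<dots> = (\<Sum>l<v. (\<Sum>j<v. ?c (adj i j) * ?c (adj j l)) * x $ l)"
    by (simp add: sum_distrib_left sum_distrib_right mult_ac) (rule sum.swap)
  also have "\<dots> = (\<Sum>l<v. ?c (K - M) * (of_bool (i = l) * x $ l) + ?c (L - M) * (?c (adj i l) * x $ l) + ?c M * x $ l)"
  proof (intro sum.cong refl)
    fix l assume "l \<in> {..<v}"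
    then have "(\<Sum>j<v. adj i j * adj j l) = (K - M) * of_bool (i = l) + (L - M) * adj i l + M"
      using i irrefl[OF i] sum_adj_adj[OF i, of l] by (auto simp: adj_def)
    then have sum_eq: "(\<Sum>j<v. ?c (adj i j) * ?c (adj j l)) = ?c ((K - M) * of_bool (i = l) + (L - M) * adj i l + M)"
      by (simp flip: of_real_sum of_real_mult)
    show "(\<Sum>j<v. ?c (adj i j) * ?c (adj j l)) * x $ l =
        ?c (K - M) * (of_bool (i = l) * x $ l) + ?c (L - M) * (?c (adj i l) * x $ l) + ?c M * x $ l"
      unfolding sum_eq by (simp add: algebra_simps)
  qed
  also have "\<dots> = ?c (K - M) * x $ i + ?c (L - M) * (e * x $ i) + ?c M * (\<Sum>l<v. x $ l)"
    using i by (simp add: sum.distrib sum_distrib_left[symmetric] sum_of_bool_eq_mult_left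
        eigenvector_adj_cmat_entry[OF x])
  finally show ?thesis .
qed

lemma eigenvector_cases:
  assumes x: "eigenvector adj_cmat x e"
  shows "e = complex_of_real K \<or> e = complex_of_real r \<or> e = complex_of_real s"
proof (cases "e = complex_of_real K")
  case False
  let ?c = complex_of_real
  have "(\<Sum>i<v. \<Sum>j<v. ?c (adj i j) * x $ j) = (\<Sum>j<v. (\<Sum>i<v. ?c (adj i j)) * x $ j)"
    by (subst sum.swap) (simp add: sum_distrib_right)
  also have "\<dots> = (\<Sum>j<v. ?c K * x $ j)"
    by (intro sum.cong refl) (simp add: col_sum_adj flip: of_real_sum)
  finally have "e * (\<Sum>i<v. x $ i) = ?c K * (\<Sum>i<v. x $ i)"
    by (simp add: eigenvector_adj_cmat_entry[OF x] sum_distrib_left)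
  then have "(\<Sum>i<v. x $ i) = 0" using False by simp
  have "x \<in> carrier_vec v" "x \<noteq> 0\<^sub>v v" using x adj_cmat_carrier unfolding eigenvector_def by auto
  then obtain i where i: "i < v" "x $ i \<noteq> 0"
    by (metis carrier_vecD eq_vecI index_zero_vec(1,2))
  have "(e * e - ?c (L - M) * e - ?c (K - M)) * x $ i = 0"
    using eigenvector_adj_cmat_square[OF x i(1)] \<open>(\<Sum>i<v. x $ i) = 0\<close> by (simp add: algebra_simps)
  then have "e * e - ?c (L - M) * e - ?c (K - M) = 0" using i by simp
  moreover have "e * e - ?c (L - M) * e - ?c (K - M) = (e - ?c r) * (e - ?c s)"
  proof -
    have "(e - ?c r) * (e - ?c s) = e * e - ?c (r + s) * e + ?c (r * s)" by (simp add: algebra_simps)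
    then show ?thesis unfolding r_add_s r_mult_s by (simp add: algebra_simps)
  qed
  ultimately show ?thesis by simp
qed simp

lemma trace_adj_cmat: "mat_trace adj_cmat = 0"
  using adj_cmat_carrier irrefl by (simp add: mat_trace_def adj_cmat_index adj_def)

lemma trace_adj_cmat_sq: "mat_trace (adj_cmat * adj_cmat) = complex_of_real (V * K)"
proof -
  have "(adj_cmat * adj_cmat) $$ (i, i) = (\<Sum>l<v. complex_of_real (adj i l * adj l i))" if "i < v" for i
    unfolding index_mult_mat_sum[OF adj_cmat_carrier adj_cmat_carrier that that]
    using that by (intro sum.cong refl) (simp add: adj_cmat_index)
  then have "mat_trace (adj_cmat * adj_cmat) = (\<Sum>i<v. \<Sum>l<v. complex_of_real (adj i l * adj l i))"
    unfolding mat_trace_def using adj_cmat_carrier by simp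
  also have "\<dots> = (\<Sum>i<v. complex_of_real K)"
    by (intro sum.cong refl) (simp add: sum_adj_adj flip: of_real_sum of_real_mult)
  finally show ?thesis by simp
qed

definition multiplicity :: "real \<Rightarrow> nat" where
  "multiplicity \<theta> = count (adj_eigenvalues v E) (complex_of_real \<theta>)"

lemma adj_eigenvalues_subset: "set_mset (adj_eigenvalues v E) \<subseteq> complex_of_real ` {K, r, s}"
proof
  fix e assume "e \<in># adj_eigenvalues v E"
  then have "poly (char_poly adj_cmat) e = 0"
    unfolding adj_eigenvalues_def adj_cmat_def[symmetric]
    by (cases "char_poly adj_cmat = 0") (auto simp: set_count_proots)
  then have "eigenvalue adj_cmat e" using eigenvalue_root_char_poly[OF adj_cmat_carrier] by simp
  then obtain x where "eigenvector adj_cmat x e" unfolding eigenvalue_def by blast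
  then show "e \<in> complex_of_real ` {K, r, s}" using eigenvector_cases by blast
qed

lemma sum_adj_eigenvalues:
  fixes f :: "complex \<Rightarrow> 'a::comm_semiring_1"
  shows "(\<Sum>e\<in>#adj_eigenvalues v E. f e) =
    of_nat (multiplicity K) * f K + of_nat (multiplicity r) * f r + of_nat (multiplicity s) * f s"
proof -
  have distinct: "complex_of_real K \<noteq> complex_of_real r" "complex_of_real K \<noteq> complex_of_real s"
    "complex_of_real r \<noteq> complex_of_real s"
    using r_lt_K s_lt_r by (simp_all only: of_real_eq_iff)
  show ?thesis
    using sum_mset_by_count[OF _ adj_eigenvalues_subset, of f] distinct by (simp add: multiplicity_def add.assoc)
qed

lemma spectrum_power_sums:
  shows "real (multiplicity K) + real (multiplicity r) + real (multiplicity s) = V"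
    and "real (multiplicity K) * K + real (multiplicity r) * r + real (multiplicity s) * s = 0"
    and "real (multiplicity K) * K\<^sup>2 + real (multiplicity r) * r\<^sup>2 + real (multiplicity s) * s\<^sup>2 = V * K"
proof -
  let ?c = complex_of_real
  have Sp: "adj_eigenvalues v E = proots (char_poly adj_cmat)"
    by (simp add: adj_eigenvalues_def adj_cmat_def)
  have "of_nat (multiplicity K + multiplicity r + multiplicity s) = (of_nat v :: complex)"
    using sum_adj_eigenvalues[of "\<lambda>_. 1 :: complex"] eigenvalue_power_sums(1)[OF adj_cmat_carrier] by (simp add: Sp)
  then show "real (multiplicity K) + real (multiplicity r) + real (multiplicity s) = V"
    by (metis of_nat_add of_nat_eq_iff)
  have "?c (real (multiplicity K) * K + real (multiplicity r) * r + real (multiplicity s) * s) = 0"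
    using sum_adj_eigenvalues[of "\<lambda>e. e"] eigenvalue_power_sums(2)[OF adj_cmat_carrier] trace_adj_cmat
    by (simp add: Sp)
  then show "real (multiplicity K) * K + real (multiplicity r) * r + real (multiplicity s) * s = 0"
    by (simp only: of_real_eq_0_iff)
  have "?c (real (multiplicity K) * K\<^sup>2 + real (multiplicity r) * r\<^sup>2 + real (multiplicity s) * s\<^sup>2) = ?c (V * K)"
    using sum_adj_eigenvalues[of "\<lambda>e. e\<^sup>2"] eigenvalue_power_sums(3)[OF adj_cmat_carrier] trace_adj_cmat_sq
    by (simp add: Sp)
  then show "real (multiplicity K) * K\<^sup>2 + real (multiplicity r) * r\<^sup>2 + real (multiplicity s) * s\<^sup>2 = V * K"
    by (simp only: of_real_eq_iff)
qed

lemma multiplicities: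
  shows "multiplicity K = 1"
    and "real (multiplicity r) + real (multiplicity s) = V - 1"
    and "real (multiplicity r) * r + real (multiplicity s) * s = - K"
    and "real (multiplicity r) * r\<^sup>2 + real (multiplicity s) * s\<^sup>2 = V * K - K\<^sup>2"
proof -
  note card = spectrum_power_sums(1) and trace = spectrum_power_sums(2) and trace_sq = spectrum_power_sums(3)
  have "real (multiplicity r) * r\<^sup>2 + real (multiplicity s) * s\<^sup>2 =
      (L - M) * (real (multiplicity r) * r + real (multiplicity s) * s) + (K - M) * (real (multiplicity r) + real (multiplicity s))"
  proof -
    have r2: "r\<^sup>2 = (L - M) * r + (K - M)" and s2: "s\<^sup>2 = (L - M) * s + (K - M)"
      using restricted_root by auto
    show ?thesis unfolding r2 s2 by (simp add: algebra_simps)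
  qed
  also have "\<dots> = (L - M) * (- real (multiplicity K) * K) + (K - M) * (V - real (multiplicity K))"
  proof -
    have "real (multiplicity r) * r + real (multiplicity s) * s = - real (multiplicity K) * K"
      and "real (multiplicity r) + real (multiplicity s) = V - real (multiplicity K)"
      using card trace by linarith+
    then show ?thesis by (simp only:)
  qed
  finally have "real (multiplicity K) * (K\<^sup>2 - (L - M) * K - (K - M)) = M * V"
    using trace_sq by (simp add: algebra_simps)
  moreover have "K\<^sup>2 - (L - M) * K - (K - M) = M * V"
  proof -
    have "M * (V - 1 - K) = M * V - M - M * K" by (simp add: algebra_simps)
    then show ?thesis unfolding power2_eq_square left_diff_distrib using feasibility by linarith
  qed
  ultimately have "real (multiplicity K) = 1" using mu_pos v_pos by simp
  then show "multiplicity K = 1" by simp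
  then show "real (multiplicity r) + real (multiplicity s) = V - 1"
    and "real (multiplicity r) * r + real (multiplicity s) * s = - K"
    and "real (multiplicity r) * r\<^sup>2 + real (multiplicity s) * s\<^sup>2 = V * K - K\<^sup>2"
    using card trace trace_sq by simp_all
qed

lemma Lambda_reg_attained:
  obtains t t' where "(t, t') = (r, s) \<or> (t, t') = (s, r)" "Lambda_reg v E k = \<bar>t\<bar>" "1 \<le> multiplicity t"
proof -
  let ?c = complex_of_real
  let ?R = "adj_eigenvalues v E - {#?c K#}"
  have count_K: "count (adj_eigenvalues v E) (?c K) = 1"
    using multiplicities(1) by (simp add: multiplicity_def)
  have R_subset: "set_mset ?R \<subseteq> ?c ` {r, s}"
  proof
    fix x assume x: "x \<in># ?R"
    then have "x \<noteq> ?c K" using count_K by (metis count_single diff_single_trivial in_diff_count less_irrefl)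
    moreover have "x \<in># adj_eigenvalues v E" using x by (meson in_diffD)
    ultimately show "x \<in> ?c ` {r, s}" using adj_eigenvalues_subset by auto
  qed
  have "size (adj_eigenvalues v E) = v"
    using eigenvalue_power_sums(1)[OF adj_cmat_carrier] by (simp add: adj_eigenvalues_def adj_cmat_def)
  moreover have "?c K \<in># adj_eigenvalues v E" using count_K by (simp flip: count_greater_zero_iff)
  ultimately have "size ?R = v - 1" by (simp add: size_Diff_singleton)
  then have "set_mset ?R \<noteq> {}" using k_add_2_le_v by auto
  then have "Max (cmod ` set_mset ?R) \<in> cmod ` set_mset ?R" by (intro Max_in) auto
  then obtain x where x: "x \<in># ?R" "Lambda_reg v E k = cmod x" by (auto simp: Lambda_reg_def)
  then have "1 \<le> count (adj_eigenvalues v E) x" by (metis in_diffD count_greater_zero_iff One_nat_def Suc_leI)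
  moreover have "x = ?c r \<or> x = ?c s" using x(1) R_subset by auto
  ultimately show ?thesis using that[of r s] that[of s r] x(2) by (auto simp: multiplicity_def)
qed

end

section \<open>The absolute bound\<close>

locale prim_srg_eigenspace = prim_srg +
  fixes t t' :: real
  assumes restricted_pair: "(t, t') = (r, s) \<or> (t, t') = (s, r)"
begin

lemma t_ne_t': "t \<noteq> t'"
  using restricted_pair s_lt_r by auto

definition Et :: "nat \<Rightarrow> nat \<Rightarrow> real" where
  "Et = bm (idem_x t t') (idem_y t t') (idem_z t t')"

lemma Et_idem: "i < v \<Longrightarrow> j < v \<Longrightarrow> (\<Sum>l<v. Et i l * Et l j) = Et i j"
  unfolding Et_def using idem_chars[OF t_ne_t'] restricted_pair by (intro bm_mult) auto

lemma Et_sym: "i < v \<Longrightarrow> j < v \<Longrightarrow> Et i j = Et j i"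
  unfolding Et_def by (rule bm_sym)

lemma Et_inner:
  assumes "i < v" "j < v"
  shows "(\<Sum>a<v. Et a i * Et a j) = Et i j"
proof -
  have "(\<Sum>a<v. Et a i * Et a j) = (\<Sum>a<v. Et i a * Et a j)"
    using assms by (intro sum.cong refl) (simp add: Et_sym)
  then show ?thesis using Et_idem[OF assms] by simp
qed

definition e0 :: real where "e0 = idem_x t t' + idem_z t t'"
definition e1 :: real where "e1 = idem_y t t' + idem_z t t'"
definition e2 :: real where "e2 = idem_z t t'"

lemma Et_entry: "i < v \<Longrightarrow> j < v \<Longrightarrow> Et i j = (if i = j then e0 else if E i j then e1 else e2)"
  using irrefl by (auto simp: Et_def bm_def adj_def e0_def e1_def e2_def)

lemma e0_ne_e1: "e0 \<noteq> e1" and e0_ne_e2: "e0 \<noteq> e2"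
proof -
  have "t - t' \<noteq> 0" "t' \<noteq> 0" "t' + 1 \<noteq> 0"
    using t_ne_t' restricted_pair r_pos s_neg restricted_ne_minus_1[of t'] by auto
  moreover have "e0 - e1 = - (t' + 1) / (t - t')" "e0 - e2 = - t' / (t - t')"
    by (simp_all add: e0_def e1_def e2_def idem_x_def idem_y_def diff_divide_distrib add_divide_distrib)
  ultimately show "e0 \<noteq> e1" "e0 \<noteq> e2" by auto
qed

text \<open>An extra coordinate \<open>v\<close>, on which the projection acts as the identity, homogenises
  quadratic polynomials on the eigenspace into symmetric tensors.\<close>

definition Ext :: "nat \<Rightarrow> nat \<Rightarrow> real" where
  "Ext a b = (if a < v \<and> b < v then Et a b else of_bool (a = v \<and> b = v))"

definition col_ext :: "real \<Rightarrow> nat \<Rightarrow> nat \<Rightarrow> real" where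
  "col_ext c i a = (if a < v then Et a i else c)"

lemma Ext_sym: "Ext a b = Ext b a"
  using Et_sym by (auto simp: Ext_def)

lemma Ext_idem:
  assumes "a \<le> v" "b \<le> v"
  shows "(\<Sum>c\<le>v. Ext a c * Ext c b) = Ext a b"
proof (cases "a < v \<and> b < v")
  case True
  then have "(\<Sum>c<v. Ext a c * Ext c b) = (\<Sum>c<v. Et a c * Et c b)"
    by (intro sum.cong refl) (simp add: Ext_def)
  then show ?thesis using True by (simp add: sum_atMost_eq_lessThan_add Ext_def Et_idem)
next
  case False
  then have "(\<Sum>c<v. Ext a c * Ext c b) = 0" by (auto simp: Ext_def intro!: sum.neutral)
  then show ?thesis using False assms by (auto simp: sum_atMost_eq_lessThan_add Ext_def)
qed

lemma Ext_col_ext: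
  assumes "i < v" "b \<le> v"
  shows "(\<Sum>a\<le>v. Ext a b * col_ext c i a) = col_ext c i b"
proof (cases "b < v")
  case True
  then have "(\<Sum>a<v. Ext a b * col_ext c i a) = (\<Sum>a<v. Et a b * Et a i)"
    by (intro sum.cong refl) (simp add: Ext_def col_ext_def)
  then show ?thesis using assms True
    by (simp add: sum_atMost_eq_lessThan_add Ext_def col_ext_def Et_inner Et_sym)
next
  case False
  then show ?thesis using assms by (simp add: sum_atMost_eq_lessThan_add Ext_def col_ext_def)
qed

lemma inner_col_ext:
  assumes "i < v" "j < v"
  shows "(\<Sum>a\<le>v. col_ext c i a * col_ext d j a) = Et i j + c * d"
proof -
  have "(\<Sum>a<v. col_ext c i a * col_ext d j a) = (\<Sum>a<v. Et a i * Et a j)"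
    by (intro sum.cong refl) (simp add: col_ext_def)
  then show ?thesis using assms by (simp add: sum_atMost_eq_lessThan_add col_ext_def Et_inner)
qed

lemma trace_Ext: "(\<Sum>a\<le>v. Ext a a) = V * e0 + 1"
proof -
  have "(\<Sum>a<v. Ext a a) = (\<Sum>a<v. e0)" by (intro sum.cong refl) (simp add: Ext_def Et_entry)
  then show ?thesis by (simp add: sum_atMost_eq_lessThan_add Ext_def)
qed

definition gap :: real where "gap = (e0 - e1) * (e0 - e2)"

lemma gap_ne_0: "gap \<noteq> 0"
  using e0_ne_e1 e0_ne_e2 by (simp add: gap_def)

text \<open>\<open>quad_tensor i\<close> is the homogenised polynomial \<open>x \<mapsto> (\<langle>x, E e\<^sub>i\<rangle> - e1) (\<langle>x, E e\<^sub>i\<rangle> - e2)\<close>;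
  pairing it with \<open>square_tensor j\<close> evaluates it at \<open>E e\<^sub>j\<close>, which gives \<open>gap\<close> for \<open>i = j\<close>
  and \<open>0\<close> otherwise. Adding \<open>sgn gap\<close> times \<open>square_tensor i\<close> therefore makes the Gram matrix of
  the tensors coercive.\<close>

definition quad_tensor :: "nat \<Rightarrow> nat \<times> nat \<Rightarrow> real" where
  "quad_tensor i = sym_tensor (col_ext (- e1) i) (col_ext (- e2) i)"

definition square_tensor :: "nat \<Rightarrow> nat \<times> nat \<Rightarrow> real" where
  "square_tensor i = sym_tensor (col_ext 1 i) (col_ext 1 i)"

definition tensor :: "nat \<Rightarrow> nat \<times> nat \<Rightarrow> real" where
  "tensor i p = quad_tensor i p + sgn gap * square_tensor i p"

definition gram :: "nat \<Rightarrow> nat \<Rightarrow> real" where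
  "gram i j = (\<Sum>p\<in>{..v} \<times> {..v}. tensor i p * tensor j p)"

lemma inner_col_ext_tensors:
  assumes "i < v" "j < v"
  shows "(\<Sum>p\<in>{..v} \<times> {..v}. sym_tensor (col_ext c i) (col_ext d i) p * sym_tensor (col_ext c' j) (col_ext d' j) p)
    = ((Et i j + c * c') * (Et i j + d * d') + (Et i j + c * d') * (Et i j + d * c')) / 2"
  using assms by (simp add: inner_sym_tensor inner_col_ext)

lemma gram_split:
  "gram i j = (\<Sum>p\<in>{..v} \<times> {..v}. quad_tensor i p * quad_tensor j p)
    + sgn gap * (\<Sum>p\<in>{..v} \<times> {..v}. quad_tensor i p * square_tensor j p)
    + sgn gap * (\<Sum>p\<in>{..v} \<times> {..v}. square_tensor i p * quad_tensor j p)
    + (sgn gap)\<^sup>2 * (\<Sum>p\<in>{..v} \<times> {..v}. square_tensor i p * square_tensor j p)"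
  unfolding gram_def tensor_def power2_eq_square by (simp add: algebra_simps sum.distrib sum_distrib_left)

lemma inner_quad_square_tensor:
  assumes "i < v" "j < v"
  shows "(\<Sum>p\<in>{..v} \<times> {..v}. quad_tensor i p * square_tensor j p) = gap * of_bool (i = j)"
    and "(\<Sum>p\<in>{..v} \<times> {..v}. square_tensor i p * quad_tensor j p) = gap * of_bool (i = j)"
proof -
  have "(Et i j - e1) * (Et i j - e2) = gap * of_bool (i = j)"
    using assms irrefl by (auto simp: Et_entry gap_def)
  then show "(\<Sum>p\<in>{..v} \<times> {..v}. quad_tensor i p * square_tensor j p) = gap * of_bool (i = j)"
    "(\<Sum>p\<in>{..v} \<times> {..v}. square_tensor i p * quad_tensor j p) = gap * of_bool (i = j)"
    using assms by (simp_all add: quad_tensor_def square_tensor_def inner_col_ext_tensors Et_sym[OF assms]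
        algebra_simps)
qed

definition gram_poly :: "real \<Rightarrow> real" where
  "gram_poly x = ((x + e1 * e1) * (x + e2 * e2) + (x + e1 * e2) * (x + e1 * e2)) / 2
     + 2 * sgn gap * ((x - e1) * (x - e2)) + (sgn gap)\<^sup>2 * ((x + 1) * (x + 1))"

lemma gram_eq_gram_poly:
  assumes "i < v" "j < v"
  shows "gram i j = gram_poly (Et i j)"
  unfolding gram_split using assms
  by (simp add: quad_tensor_def square_tensor_def inner_col_ext_tensors gram_poly_def Et_sym[OF assms]
      algebra_simps)

lemma gram_bm:
  "i < v \<Longrightarrow> j < v \<Longrightarrow>
    gram i j = bm (gram_poly e0 - gram_poly e2) (gram_poly e1 - gram_poly e2) (gram_poly e2) i j"
  using irrefl by (auto simp: gram_eq_gram_poly Et_entry bm_def adj_def)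

lemma gram_coercive: "2 * \<bar>gap\<bar> * (\<Sum>i<v. (u i)\<^sup>2) \<le> (\<Sum>i<v. \<Sum>j<v. u i * u j * gram i j)"
proof -
  let ?I = "{..v} \<times> {..v}"
  let ?Q = "\<lambda>i j. \<Sum>p\<in>?I. quad_tensor i p * quad_tensor j p"
  let ?S = "\<lambda>i j. \<Sum>p\<in>?I. square_tensor i p * square_tensor j p"
  have "(\<Sum>i<v. \<Sum>j<v. u i * u j * gram i j) = (\<Sum>i<v. \<Sum>j<v. u i * u j * ?Q i j
      + 2 * sgn gap * gap * (u i * u j * of_bool (i = j)) + (sgn gap)\<^sup>2 * (u i * u j * ?S i j))"
    by (intro sum.cong refl) (simp add: gram_split inner_quad_square_tensor algebra_simps)
  also have "\<dots> = (\<Sum>i<v. \<Sum>j<v. u i * u j * ?Q i j)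
    + 2 * sgn gap * gap * (\<Sum>i<v. \<Sum>j<v. u i * u j * of_bool (i = j))
    + (sgn gap)\<^sup>2 * (\<Sum>i<v. \<Sum>j<v. u i * u j * ?S i j)"
    by (simp only: sum.distrib sum_distrib_left[symmetric])
  finally have quadratic: "(\<Sum>i<v. \<Sum>j<v. u i * u j * gram i j) = \<dots>" .
  have "(\<Sum>i<v. \<Sum>j<v. u i * u j * of_bool (i = j)) = (\<Sum>i<v. (u i)\<^sup>2)"
  proof (intro sum.cong refl)
    fix i assume "i \<in> {..<v}"
    then show "(\<Sum>j<v. u i * u j * of_bool (i = j)) = (u i)\<^sup>2"
      using sum_of_bool_eq_mult_left[of i v "\<lambda>j. u i * u j"] by (simp add: mult.commute power2_eq_square)
  qed
  moreover have "sgn gap * gap = \<bar>gap\<bar>" by (simp add: abs_sgn)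
  ultimately show ?thesis
    using quadratic gram_quadratic_form_nonneg[where x = u and n = v and A = ?I and Y = quad_tensor]
      gram_quadratic_form_nonneg[where x = u and n = v and A = ?I and Y = square_tensor]
    by (simp add: mult.assoc)
qed

lemma gram_inverse_exists:
  obtains H where "\<And>i j. i < v \<Longrightarrow> j < v \<Longrightarrow> H i j = H j i"
    and "\<And>i l. i < v \<Longrightarrow> l < v \<Longrightarrow> (\<Sum>j<v. gram i j * H j l) = of_bool (i = l)"
proof -
  let ?gx = "gram_poly e0 - gram_poly e2" and ?gy = "gram_poly e1 - gram_poly e2" and ?gz = "gram_poly e2"
  have coercive: "2 * \<bar>gap\<bar> * (\<Sum>i<v. (u i)\<^sup>2) \<le> (\<Sum>i<v. \<Sum>j<v. u i * u j * bm ?gx ?gy ?gz i j)" for u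
  proof -
    have "(\<Sum>i<v. \<Sum>j<v. u i * u j * gram i j) = (\<Sum>i<v. \<Sum>j<v. u i * u j * bm ?gx ?gy ?gz i j)"
      by (intro sum.cong refl) (simp add: gram_bm)
    then show ?thesis using gram_coercive[of u] by simp
  qed
  have "0 < 2 * \<bar>gap\<bar>" using gap_ne_0 by simp
  then have "bm_char r ?gx ?gy \<noteq> 0" "bm_char s ?gx ?gy \<noteq> 0" "bm_char_J ?gx ?gy ?gz \<noteq> 0"
    using bm_chars_pos[OF coercive] by (simp_all add: order.strict_iff_not)
  then obtain hx hy hz where inverse:
    "\<And>i l. i < v \<Longrightarrow> l < v \<Longrightarrow> (\<Sum>j<v. bm ?gx ?gy ?gz i j * bm hx hy hz j l) = of_bool (i = l)"
    by (rule bm_inverse) blast+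
  show ?thesis
  proof (rule that[of "bm hx hy hz"])
    show "bm hx hy hz i j = bm hx hy hz j i" if "i < v" "j < v" for i j using that by (rule bm_sym)
    show "(\<Sum>j<v. gram i j * bm hx hy hz j l) = of_bool (i = l)" if "i < v" "l < v" for i l
    proof -
      have "(\<Sum>j<v. gram i j * bm hx hy hz j l) = (\<Sum>j<v. bm ?gx ?gy ?gz i j * bm hx hy hz j l)"
        using that by (intro sum.cong refl) (simp add: gram_bm)
      then show ?thesis using inverse[OF that] by simp
    qed
  qed
qed

lemma sym_square_Ext_tensor:
  assumes "j < v" "c \<le> v" "d \<le> v"
  shows "(\<Sum>p\<in>{..v} \<times> {..v}. sym_square Ext p (c, d) * tensor j p) = tensor j (c, d)"
proof -
  have "(\<Sum>p\<in>{..v} \<times> {..v}. sym_square Ext p (c, d) * tensor j p) =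
      (\<Sum>p\<in>{..v} \<times> {..v}. sym_square Ext p (c, d) * quad_tensor j p)
      + sgn gap * (\<Sum>p\<in>{..v} \<times> {..v}. sym_square Ext p (c, d) * square_tensor j p)"
    unfolding tensor_def by (simp add: algebra_simps sum.distrib sum_distrib_left)
  then show ?thesis
    unfolding quad_tensor_def square_tensor_def sym_square_sym_tensor
    using assms by (simp add: sym_tensor_def Ext_col_ext tensor_def quad_tensor_def square_tensor_def)
qed

theorem absolute_bound: "V \<le> ((V * e0 + 1)\<^sup>2 + (V * e0 + 1)) / 2"
proof -
  obtain H where "\<And>i j. i < v \<Longrightarrow> j < v \<Longrightarrow> H i j = H j i"
    and "\<And>i l. i < v \<Longrightarrow> l < v \<Longrightarrow> (\<Sum>j<v. gram i j * H j l) = of_bool (i = l)"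
    by (rule gram_inverse_exists) blast+
  then interpret gram_inverse "{..v} \<times> {..v}" v tensor H
    by unfold_locales (simp_all add: gram_def)
  have "V \<le> (\<Sum>p\<in>{..v} \<times> {..v}. \<Sum>q\<in>{..v} \<times> {..v}. (sym_square Ext p q)\<^sup>2)"
    by (rule card_le_frobenius_norm) (auto simp: sym_square_Ext_tensor)
  also have "\<dots> = ((\<Sum>a\<le>v. Ext a a)\<^sup>2 + (\<Sum>a\<le>v. Ext a a)) / 2"
    by (rule frobenius_sym_square, rule Ext_sym, rule Ext_idem) auto
  finally show ?thesis unfolding trace_Ext .
qed

lemma restricted_multiplicities:
  "real (multiplicity t) + real (multiplicity t') = V - 1"
  "real (multiplicity t) * t + real (multiplicity t') * t' = - K"
  using restricted_pair multiplicities(2,3) by auto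

lemma multiplicity_eq_trace: "real (multiplicity t) = V * e0"
proof -
  have "real (multiplicity t') = V - 1 - real (multiplicity t)"
    using restricted_multiplicities(1) by linarith
  then have "real (multiplicity t) * t + (V - 1 - real (multiplicity t)) * t' = - K"
    using restricted_multiplicities(2) by simp
  then have "real (multiplicity t) * (t - t') = - K - (V - 1) * t'"
    unfolding left_diff_distrib right_diff_distrib by linarith
  moreover have "V * e0 * (t - t') = - K - (V - 1) * t'"
  proof -
    have "idem_x t t' * (t - t') = - t'" "idem_z t t' * (t - t') * V = - (K - t')"
      using t_ne_t' v_pos by (simp_all add: idem_x_def idem_z_def)
    moreover have "V * e0 * (t - t') = V * (idem_x t t' * (t - t')) + idem_z t t' * (t - t') * V"
      by (simp add: e0_def algebra_simps)
    ultimately have "V * e0 * (t - t') = V * (- t') + - (K - t')" by simp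
    then show ?thesis by (simp add: algebra_simps)
  qed
  ultimately have "real (multiplicity t) * (t - t') = V * e0 * (t - t')" by simp
  then show ?thesis using t_ne_t' by simp
qed

lemma multiplicity_mult_square_le: "real (multiplicity t) * t\<^sup>2 \<le> K * (V - K)"
proof -
  have "0 \<le> real (multiplicity r) * r\<^sup>2" "0 \<le> real (multiplicity s) * s\<^sup>2" by simp_all
  moreover have "K * (V - K) = V * K - K\<^sup>2" by (simp add: algebra_simps power2_eq_square)
  ultimately show ?thesis using restricted_pair multiplicities(4) by (auto; linarith)
qed

end

section \<open>The ratio \<open>k / \<Lambda>\<close>\<close>

text \<open>For \<open>k < \<surd>v\<close> already \<open>\<theta> < k\<close> suffices; otherwise the absolute bound forces
  \<open>m \<surd>v > v - k\<close>, and the trace bound gives \<open>\<theta>\<^sup>2 < k \<surd>v\<close>.\<close>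

lemma sqrt_ratio_bound:
  fixes k v m \<theta> :: real
  assumes \<theta>: "0 < \<theta>" "\<theta> < k" and v: "2 \<le> v" and m: "1 \<le> m"
    and trace: "m * \<theta>\<^sup>2 \<le> k * (v - k)" and absolute: "v \<le> ((m + 1)\<^sup>2 + (m + 1)) / 2"
  shows "sqrt (k / sqrt v) < k / \<theta>"
proof -
  define q where "q = sqrt v"
  have q: "1 < q" "q\<^sup>2 = v" using v unfolding q_def by (auto simp: real_less_rsqrt)
  have "\<theta>\<^sup>2 < k * q"
  proof (cases "k < q")
    case True
    then show ?thesis using \<theta> by (simp add: power2_eq_square mult_strict_mono)
  next
    case False
    have "v - k < m * q"
    proof (rule ccontr)
      assume "\<not> v - k < m * q"
      then have "m * q \<le> (q - 1) * q" using False q by (simp add: power2_eq_square algebra_simps)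
      then have "m + 1 \<le> q" using q by simp
      then have "(m + 1)\<^sup>2 + (m + 1) \<le> v + q" using m q(2) power_mono[of "m + 1" q 2] by simp
      then have "q\<^sup>2 \<le> q" using absolute q(2) by simp
      then show False using q by (simp add: power2_eq_square)
    qed
    then have "k * (v - k) < k * (m * q)" using \<theta> by simp
    then have "m * \<theta>\<^sup>2 < m * (k * q)" using trace by (simp add: mult_ac)
    then show ?thesis using m by simp
  qed
  then have "k / q < (k / \<theta>)\<^sup>2" using \<theta> q by (simp add: field_simps power2_eq_square)
  then show ?thesis using \<theta> unfolding q_def by (intro real_less_lsqrt) auto
qed

theorem lemma1p3:
  fixes v k lam mu :: nat and E :: "nat \<Rightarrow> nat \<Rightarrow> bool"
  assumes "primitive_srg v E k lam mu"
  shows "real k / Lambda_reg v E k > sqrt (real k / sqrt (real v))"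
proof -
  interpret prim_srg v E k lam mu by unfold_locales (rule assms)
  obtain t t' where pair: "(t, t') = (r, s) \<or> (t, t') = (s, r)"
    and Lambda: "Lambda_reg v E k = \<bar>t\<bar>" and multiplicity_pos: "1 \<le> multiplicity t"
    by (rule Lambda_reg_attained)
  interpret prim_srg_eigenspace v E k lam mu t t' by unfold_locales (rule pair)
  have "0 < \<bar>t\<bar>" "\<bar>t\<bar> < K" using pair r_pos s_neg r_lt_K neg_K_lt_s by auto
  moreover have "2 \<le> V" using k_add_2_le_v by simp
  moreover have "real (multiplicity t) * \<bar>t\<bar>\<^sup>2 \<le> K * (V - K)" using multiplicity_mult_square_le by simp
  moreover have "V \<le> ((real (multiplicity t) + 1)\<^sup>2 + (real (multiplicity t) + 1)) / 2"
    using absolute_bound unfolding multiplicity_eq_trace .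
  ultimately show ?thesis unfolding Lambda using multiplicity_pos by (intro sqrt_ratio_bound) auto
qed

end
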